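(* Let $\mathcal{S}=\{1,\dots,S\}$, $T>0$, let $R_t$ be the rate matrix of a forward CTMC with $X_0\sim p_{\text{data}}$, conditionals $q_{t|0}$, marginals $q_t$ and posterior $p(x_0\mid x_t)$, and let $\hat R_t(i,j)=R_t(j,i)q_t(j)/q_t(i)$ be the true reverse rates, $\hat R_t(i,j\mid x_0)=R_t(j,i)\frac{q_{t|0}(j\mid x_0)}{q_{t|0}(i\mid x_0)}$ the conditional reverse rates, and $f(r,c)=r\log\frac rc-r+c$. Let $R^\theta_t(i,j)$ be model reverse rates, and define \[ \mathcal{L}_{\mathrm{KL}}(\theta):=\int_0^T\mathbb{E}_{x_0\sim p_{\text{data}},\,x_t\sim q_{t|0}(\cdot\mid x_0)}\Bigl[\sum_{j\ne x_t}f\bigl(\hat R_t(x_t,j\mid x_0),R^\theta_t(x_t,j)\bigr)\Bigr]\mathrm{d}t, \] \[ \mathrm{KL}(\hat{\mathbb{Q}}\|\mathbb{P}^\theta):=\int_0^T\sum_iq_t(i)\sum_{j\ne i}f\bigl(\hat R_t(i,j),R^\theta_t(i,j)\bigr)\mathrm{d}t. \] Assume: (i) the forward quantities $q_t$, $q_{t|0}$, $p(x_0\mid x_t)$ do not depend on $\theta$; (ii) $R^\theta_t(i,j)>0$ and is differentiable in $\theta$ for all $i\ne j$; (iii) differentiation in $\theta$ can be exchanged with expectation/integration. Then there is a $\theta$-independent constant $C_{\mathrm{gap}}\ge0$ with $\mathcal{L}_{\mathrm{KL}}(\theta)=\mathrm{KL}(\hat{\mathbb{Q}}\|\mathbb{P}^\theta)+C_{\mathrm{gap}}$;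 hence $\nabla_\theta\mathcal{L}_{\mathrm{KL}}(\theta)=\nabla_\theta\mathrm{KL}(\hat{\mathbb{Q}}\|\mathbb{P}^\theta)$, $\arg\min_\theta\mathcal{L}_{\mathrm{KL}}(\theta)=\arg\min_\theta\mathrm{KL}(\hat{\mathbb{Q}}\|\mathbb{P}^\theta)$, and every stationary point of one objective is a stationary point of the other.
   Context: A rate matrix $R_t$ satisfies $R_t(i,j)\ge0$ ($i\ne j$), $\sum_jR_t(i,j)=0$. $q_{t|0}(i\mid x_0)=\mathbb{P}(X_t=i\mid X_0=x_0)$, $q_t(i)=\sum_{x_0}p_{\text{data}}(x_0)q_{t|0}(i\mid x_0)$, $p(x_0\mid x_t)=p_{\text{data}}(x_0)q_{t|0}(x_t\mid x_0)/q_t(x_t)$. $\hat{\mathbb{Q}}$ and $\mathbb{P}^\theta$ denote the path measures of the true reverse process and of the generative process with rates $R^\theta_t$. All ratios and logarithms are assumed well defined (convention $0\log0=0$). *)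

theory Defs
  imports "HOL-Analysis.Analysis"
begin

text \<open>State space: an arbitrary finite type 's (playing the role of {1,...,S}).  Conditionals: qcond t i x0 = q_{t|0}(i | x0).\<close>

definition rate_matrix :: "('s::finite \<Rightarrow> 's \<Rightarrow> real) \<Rightarrow> bool" where
  "rate_matrix Q \<longleftrightarrow> (\<forall>i j. i \<noteq> j \<longrightarrow> Q i j \<ge> 0) \<and> (\<forall>i. (\<Sum>j\<in>UNIV. Q i j) = 0)"

definition is_distribution :: "('s::finite \<Rightarrow> real) \<Rightarrow> bool" where
  "is_distribution p \<longleftrightarrow> (\<forall>x. p x \<ge> 0) \<and> (\<Sum>x\<in>UNIV. p x) = 1"

definition q_marg :: "('s::finite \<Rightarrow> real) \<Rightarrow> (real \<Rightarrow> 's \<Rightarrow> 's \<Rightarrow> real) \<Rightarrow> real \<Rightarrow> 's \<Rightarrow> real" where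
  "q_marg pdata qcond t i = (\<Sum>x0\<in>UNIV. pdata x0 * qcond t i x0)"

definition rev_rate :: "(real \<Rightarrow> 's::finite \<Rightarrow> 's \<Rightarrow> real) \<Rightarrow> ('s \<Rightarrow> real) \<Rightarrow> (real \<Rightarrow> 's \<Rightarrow> 's \<Rightarrow> real)
    \<Rightarrow> real \<Rightarrow> 's \<Rightarrow> 's \<Rightarrow> real" where
  "rev_rate R pdata qcond t i j = R t j i * q_marg pdata qcond t j / q_marg pdata qcond t i"

definition cond_rev_rate :: "(real \<Rightarrow> 's \<Rightarrow> 's \<Rightarrow> real) \<Rightarrow> (real \<Rightarrow> 's \<Rightarrow> 's \<Rightarrow> real)
    \<Rightarrow> real \<Rightarrow> 's \<Rightarrow> 's \<Rightarrow> 's \<Rightarrow> real" where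
  "cond_rev_rate R qcond t x0 i j = R t j i * qcond t j x0 / qcond t i x0"

text \<open>f(r,c) = r log(r/c) - r + c  (with 0 log 0 = 0, automatic since 0 * _ = 0).\<close>
definition fdiv :: "real \<Rightarrow> real \<Rightarrow> real" where
  "fdiv r c = r * ln (r / c) - r + c"

definition LKL_integrand :: "(real \<Rightarrow> 's::finite \<Rightarrow> 's \<Rightarrow> real) \<Rightarrow> ('s \<Rightarrow> real) \<Rightarrow> (real \<Rightarrow> 's \<Rightarrow> 's \<Rightarrow> real)
    \<Rightarrow> ('p \<Rightarrow> real \<Rightarrow> 's \<Rightarrow> 's \<Rightarrow> real) \<Rightarrow> 'p \<Rightarrow> real \<Rightarrow> real" where
  "LKL_integrand R pdata qcond Rth th t =
     (\<Sum>x0\<in>UNIV. pdata x0 * (\<Sum>xt\<in>UNIV. qcond t xt x0 *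
        (\<Sum>j\<in>UNIV - {xt}. fdiv (cond_rev_rate R qcond t x0 xt j) (Rth th t xt j))))"

definition KL_integrand :: "(real \<Rightarrow> 's::finite \<Rightarrow> 's \<Rightarrow> real) \<Rightarrow> ('s \<Rightarrow> real) \<Rightarrow> (real \<Rightarrow> 's \<Rightarrow> 's \<Rightarrow> real)
    \<Rightarrow> ('p \<Rightarrow> real \<Rightarrow> 's \<Rightarrow> 's \<Rightarrow> real) \<Rightarrow> 'p \<Rightarrow> real \<Rightarrow> real" where
  "KL_integrand R pdata qcond Rth th t =
     (\<Sum>i\<in>UNIV. q_marg pdata qcond t i *
        (\<Sum>j\<in>UNIV - {i}. fdiv (rev_rate R pdata qcond t i j) (Rth th t i j)))"

definition L_KL :: "real \<Rightarrow> (real \<Rightarrow> 's::finite \<Rightarrow> 's \<Rightarrow> real) \<Rightarrow> ('s \<Rightarrow> real) \<Rightarrow> (real \<Rightarrow> 's \<Rightarrow> 's \<Rightarrow> real)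
    \<Rightarrow> ('p \<Rightarrow> real \<Rightarrow> 's \<Rightarrow> 's \<Rightarrow> real) \<Rightarrow> 'p \<Rightarrow> real" where
  "L_KL T R pdata qcond Rth th = (LINT t:{0..T}|lborel. LKL_integrand R pdata qcond Rth th t)"

definition KL_path :: "real \<Rightarrow> (real \<Rightarrow> 's::finite \<Rightarrow> 's \<Rightarrow> real) \<Rightarrow> ('s \<Rightarrow> real) \<Rightarrow> (real \<Rightarrow> 's \<Rightarrow> 's \<Rightarrow> real)
    \<Rightarrow> ('p \<Rightarrow> real \<Rightarrow> 's \<Rightarrow> 's \<Rightarrow> real) \<Rightarrow> 'p \<Rightarrow> real" where
  "KL_path T R pdata qcond Rth th = (LINT t:{0..T}|lborel. KL_integrand R pdata qcond Rth th t)"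

end

theory Submission
  imports Defs
begin

text \<open>Write \<open>f(r,c) = (r ln r - r) + c - r ln c\<close>: for fixed \<open>r\<close> only the last two terms see \<open>c\<close>,
  and they are affine in \<open>r\<close>. The true reverse rate \<open>R_hat_t(i,j)\<close> is the posterior mean of the
  conditional reverse rates \<open>R_hat_t(i,j|x0)\<close> under \<open>p(x0|x_t = i)\<close>, so averaging \<open>f(R_hat_t(i,j|x0), c)\<close>
  over the posterior gives \<open>f(R_hat_t(i,j), c)\<close> plus the Bregman gap
  \<open>E[f(R_hat_t(i,j|x0), R_hat_t(i,j))]\<close>, which is nonnegative and does not involve \<open>c = R^theta_t(i,j)\<close>.
  Integrating in time, \<open>L_KL\<close> and \<open>KL\<close> differ by a nonnegative constant.\<close>

lemma fdiv_eq_entropy_form: "r \<ge> 0 \<Longrightarrow> c > 0 \<Longrightarrow> fdiv r c = (r * ln r - r) + c - r * ln c"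
  unfolding fdiv_def by (cases "r = 0") (auto simp: ln_div algebra_simps)

lemma fdiv_nonneg:
  assumes "r \<ge> 0" "c > 0"
  shows "fdiv r c \<ge> 0"
proof (cases "r = 0")
  case True
  then show ?thesis using assms by (simp add: fdiv_def)
next
  case False
  with assms have r: "r > 0" by simp
  have "r * ln (c / r) \<le> r * (c / r - 1)"
    using assms r by (intro mult_left_mono ln_le_minus_one) auto
  moreover have "ln (r / c) = - ln (c / r)" using r assms by (simp add: ln_div)
  moreover have "r * (c / r - 1) = c - r" using r by (simp add: field_simps)
  ultimately show ?thesis by (simp add: fdiv_def)
qed

lemma weighted_mean_eq_0_imp_products_eq_0:
  fixes w r :: "'a \<Rightarrow> real"
  assumes "finite A" "\<And>x. x \<in> A \<Longrightarrow> w x \<ge> 0" "\<And>x. x \<in> A \<Longrightarrow> r x \<ge> 0"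
    and "(\<Sum>x\<in>A. w x * r x) / (\<Sum>x\<in>A. w x) = 0" and "x \<in> A"
  shows "w x * r x = 0"
proof (cases "(\<Sum>x\<in>A. w x) = 0")
  case True
  then have "w x = 0" using assms by (simp add: sum_nonneg_eq_0_iff)
  then show ?thesis by simp
next
  case False
  then have "(\<Sum>x\<in>A. w x * r x) = 0" using assms(4) by simp
  then show ?thesis using assms by (simp add: sum_nonneg_eq_0_iff)
qed

text \<open>Pythagorean identity for the Bregman divergence \<open>fdiv\<close> of \<open>r ln r - r\<close>. It also holds when
  \<open>m = 0\<close> (including the junk case of zero total weight), where \<open>fdiv (r x) 0\<close> is meaningless
  but every \<open>w x * r x\<close> vanishes.\<close>

lemma sum_fdiv_mean_decomp:
  fixes w r :: "'a \<Rightarrow> real"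
  assumes A: "finite A" and w: "\<And>x. x \<in> A \<Longrightarrow> w x \<ge> 0" and r: "\<And>x. x \<in> A \<Longrightarrow> r x \<ge> 0"
    and c: "c > 0"
  defines "m \<equiv> (\<Sum>x\<in>A. w x * r x) / (\<Sum>x\<in>A. w x)"
  shows "(\<Sum>x\<in>A. w x * fdiv (r x) c) = (\<Sum>x\<in>A. w x) * fdiv m c + (\<Sum>x\<in>A. w x * fdiv (r x) m)"
proof (cases "m = 0")
  case True
  then have wr: "w x * r x = 0" if "x \<in> A" for x
    using weighted_mean_eq_0_imp_products_eq_0[of A w r] A w r that unfolding m_def by blast
  have "(\<Sum>x\<in>A. w x * fdiv (r x) c) = (\<Sum>x\<in>A. w x * c)"
    by (rule sum.cong) (use wr in \<open>auto simp: fdiv_def\<close>)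
  moreover have "(\<Sum>x\<in>A. w x * fdiv (r x) m) = 0"
    by (rule sum.neutral) (use wr True in \<open>auto simp: fdiv_def algebra_simps\<close>)
  ultimately show ?thesis using True by (simp add: fdiv_def sum_distrib_right)
next
  case False
  have m: "m > 0" using False w r unfolding m_def by (simp add: sum_nonneg less_le)
  have mean: "(\<Sum>x\<in>A. w x * r x) = (\<Sum>x\<in>A. w x) * m"
    using False unfolding m_def by auto
  let ?H = "\<Sum>x\<in>A. w x * (r x * ln (r x) - r x)"
  have "(\<Sum>x\<in>A. w x * fdiv (r x) c) = ?H + (\<Sum>x\<in>A. w x) * c - ln c * (\<Sum>x\<in>A. w x * r x)"
    using r c by (simp add: fdiv_eq_entropy_form algebra_simps sum.distrib sum_subtractf
        sum_distrib_left sum_distrib_right)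
  moreover have "(\<Sum>x\<in>A. w x * fdiv (r x) m) = ?H + (\<Sum>x\<in>A. w x) * m - ln m * (\<Sum>x\<in>A. w x * r x)"
    using r m by (simp add: fdiv_eq_entropy_form algebra_simps sum.distrib sum_subtractf
        sum_distrib_left sum_distrib_right)
  ultimately show ?thesis
    using m c unfolding mean by (simp add: fdiv_eq_entropy_form algebra_simps)
qed

lemma sum_fdiv_mean_nonneg:
  fixes w r :: "'a \<Rightarrow> real"
  assumes A: "finite A" and w: "\<And>x. x \<in> A \<Longrightarrow> w x \<ge> 0" and r: "\<And>x. x \<in> A \<Longrightarrow> r x \<ge> 0"
  defines "m \<equiv> (\<Sum>x\<in>A. w x * r x) / (\<Sum>x\<in>A. w x)"
  shows "(\<Sum>x\<in>A. w x * fdiv (r x) m) \<ge> 0"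
proof (cases "m = 0")
  case True
  then have "w x * r x = 0" if "x \<in> A" for x
    using weighted_mean_eq_0_imp_products_eq_0[of A w r] A w r that unfolding m_def by blast
  then have "(\<Sum>x\<in>A. w x * fdiv (r x) m) = 0"
    by (intro sum.neutral) (use True in \<open>auto simp: fdiv_def algebra_simps\<close>)
  then show ?thesis by simp
next
  case False
  then have "m > 0" using w r unfolding m_def by (simp add: sum_nonneg less_le)
  then show ?thesis using w r by (intro sum_nonneg mult_nonneg_nonneg fdiv_nonneg) auto
qed

lemma cond_rev_rate_nonneg:
  assumes "R t j i \<ge> 0" "\<And>k. qcond t k x0 > 0"
  shows "cond_rev_rate R qcond t x0 i j \<ge> 0"
  using assms by (simp add: cond_rev_rate_def less_imp_le)

lemma rev_rate_eq_posterior_mean: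
  assumes "\<And>x0. qcond t i x0 \<noteq> 0"
  shows "rev_rate R pdata qcond t i j =
    (\<Sum>x0\<in>UNIV. pdata x0 * qcond t i x0 * cond_rev_rate R qcond t x0 i j) / q_marg pdata qcond t i"
proof -
  have "(\<Sum>x0\<in>UNIV. pdata x0 * qcond t i x0 * cond_rev_rate R qcond t x0 i j)
      = R t j i * q_marg pdata qcond t j"
    using assms by (simp add: cond_rev_rate_def q_marg_def sum_distrib_left mult_ac)
  then show ?thesis by (simp add: rev_rate_def)
qed

definition rev_rate_gap ::
    "(real \<Rightarrow> 's::finite \<Rightarrow> 's \<Rightarrow> real) \<Rightarrow> ('s \<Rightarrow> real) \<Rightarrow> (real \<Rightarrow> 's \<Rightarrow> 's \<Rightarrow> real) \<Rightarrow> real \<Rightarrow> real" where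
  "rev_rate_gap R pdata qcond t =
     (\<Sum>i\<in>UNIV. \<Sum>j\<in>UNIV - {i}. \<Sum>x0\<in>UNIV.
        pdata x0 * qcond t i x0 * fdiv (cond_rev_rate R qcond t x0 i j) (rev_rate R pdata qcond t i j))"

lemma rev_rate_gap_nonneg:
  fixes R :: "real \<Rightarrow> 's::finite \<Rightarrow> 's \<Rightarrow> real"
  assumes "\<And>x0. pdata x0 \<ge> 0" "\<And>i x0. qcond t i x0 > 0" "\<And>i j. i \<noteq> j \<Longrightarrow> R t i j \<ge> 0"
  shows "rev_rate_gap R pdata qcond t \<ge> 0"
  unfolding rev_rate_gap_def
proof (rule sum_nonneg, rule sum_nonneg)
  fix i j :: 's assume "j \<in> UNIV - {i}"
  then show "(\<Sum>x0\<in>UNIV. pdata x0 * qcond t i x0 *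
      fdiv (cond_rev_rate R qcond t x0 i j) (rev_rate R pdata qcond t i j)) \<ge> 0"
    using sum_fdiv_mean_nonneg[of UNIV "\<lambda>x0. pdata x0 * qcond t i x0" "\<lambda>x0. cond_rev_rate R qcond t x0 i j"]
      assms cond_rev_rate_nonneg[of R t j i qcond]
    by (auto simp: rev_rate_eq_posterior_mean q_marg_def less_imp_le less_imp_neq[symmetric] mult_ac)
qed

lemma LKL_integrand_eq_KL_integrand_add_gap:
  fixes R :: "real \<Rightarrow> 's::finite \<Rightarrow> 's \<Rightarrow> real"
  assumes "\<And>x0. pdata x0 \<ge> 0" "\<And>i x0. qcond t i x0 > 0" "\<And>i j. i \<noteq> j \<Longrightarrow> R t i j \<ge> 0"
    and "\<And>i j. i \<noteq> j \<Longrightarrow> Rth th t i j > 0"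
  shows "LKL_integrand R pdata qcond Rth th t
    = KL_integrand R pdata qcond Rth th t + rev_rate_gap R pdata qcond t"
proof -
  let ?w = "\<lambda>i x0. pdata x0 * qcond t i x0"
  let ?r = "\<lambda>i j x0. cond_rev_rate R qcond t x0 i j"
  have split: "(\<Sum>x0\<in>UNIV. ?w i x0 * fdiv (?r i j x0) (Rth th t i j))
      = q_marg pdata qcond t i * fdiv (rev_rate R pdata qcond t i j) (Rth th t i j)
        + (\<Sum>x0\<in>UNIV. ?w i x0 * fdiv (?r i j x0) (rev_rate R pdata qcond t i j))" if "j \<noteq> i" for i j
    using sum_fdiv_mean_decomp[of UNIV "?w i" "?r i j" "Rth th t i j"]
      assms that cond_rev_rate_nonneg[of R t j i qcond]
    by (auto simp: rev_rate_eq_posterior_mean q_marg_def less_imp_le less_imp_neq[symmetric] mult_ac)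
  have "LKL_integrand R pdata qcond Rth th t =
      (\<Sum>x0\<in>UNIV. \<Sum>i\<in>UNIV. \<Sum>j\<in>UNIV - {i}. ?w i x0 * fdiv (?r i j x0) (Rth th t i j))"
    unfolding LKL_integrand_def by (simp add: sum_distrib_left mult.assoc)
  also have "\<dots> = (\<Sum>i\<in>UNIV. \<Sum>j\<in>UNIV - {i}. \<Sum>x0\<in>UNIV. ?w i x0 * fdiv (?r i j x0) (Rth th t i j))"
    by (subst sum.swap) (simp add: sum.swap[where A = UNIV])
  also have "\<dots> = (\<Sum>i\<in>UNIV. \<Sum>j\<in>UNIV - {i}.
      q_marg pdata qcond t i * fdiv (rev_rate R pdata qcond t i j) (Rth th t i j)
      + (\<Sum>x0\<in>UNIV. ?w i x0 * fdiv (?r i j x0) (rev_rate R pdata qcond t i j)))"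
    by (intro sum.cong refl) (simp add: split)
  also have "\<dots> = KL_integrand R pdata qcond Rth th t + rev_rate_gap R pdata qcond t"
    unfolding KL_integrand_def rev_rate_gap_def by (simp add: sum.distrib sum_distrib_left)
  finally show ?thesis .
qed

lemma set_integrals_differ_by_const:
  fixes f g :: "'p \<Rightarrow> 'a \<Rightarrow> real" and k :: "'a \<Rightarrow> real"
  assumes f: "\<And>\<theta>. set_integrable M S (f \<theta>)" and g: "\<And>\<theta>. set_integrable M S (g \<theta>)"
    and fgk: "\<And>\<theta>. AE x\<in>S in M. f \<theta> x = g \<theta> x + k x" and k: "AE x\<in>S in M. k x \<ge> 0"
  shows "\<exists>C\<ge>0. \<forall>\<theta>. (LINT x:S|M. f \<theta> x) = (LINT x:S|M. g \<theta> x) + C"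
proof -
  define d where "d \<theta> = (LINT x:S|M. f \<theta> x - g \<theta> x)" for \<theta>
  have fg: "set_integrable M S (\<lambda>x. f \<theta> x - g \<theta> x)" for \<theta>
    using f g by (rule set_integral_diff(1))
  have split: "(LINT x:S|M. f \<theta> x) = (LINT x:S|M. g \<theta> x) + d \<theta>" for \<theta>
    using set_integral_diff(2)[OF f g] unfolding d_def by simp
  have "d \<theta> \<le> d \<theta>'" for \<theta> \<theta>'
    unfolding d_def
  proof (rule set_integral_mono_AE[OF fg fg])
    show "AE x\<in>S in M. f \<theta> x - g \<theta> x \<le> f \<theta>' x - g \<theta>' x"
      using fgk[of \<theta>] fgk[of \<theta>'] by eventually_elim simp
  qed
  then have d_const: "d \<theta> = d \<theta>'" for \<theta> \<theta>'
    by (meson antisym)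
  have "0 \<le> d \<theta>" for \<theta>
  proof -
    have "(LINT x:S|M. 0) \<le> d \<theta>"
      unfolding d_def
    proof (rule set_integral_mono_AE[OF _ fg])
      show "set_integrable M S (\<lambda>x. 0::real)" by (simp add: set_integrable_def)
      show "AE x\<in>S in M. 0 \<le> f \<theta> x - g \<theta> x"
        using fgk[of \<theta>] k by eventually_elim simp
    qed
    then show ?thesis by simp
  qed
  then show ?thesis
    using split d_const by metis
qed

lemma has_derivative_add_const_iff:
  "((\<lambda>x. f x + c) has_derivative D) F \<longleftrightarrow> (f has_derivative D) F"
proof
  assume "((\<lambda>x. f x + c) has_derivative D) F"
  then have "((\<lambda>x. (f x + c) + - c) has_derivative D) F"
    by (rule has_derivative_add_const)
  then show "(f has_derivative D) F" by simp
qed (rule has_derivative_add_const)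

theorem proposition4p8:
  fixes T :: real
    and R :: "real \<Rightarrow> 's::finite \<Rightarrow> 's \<Rightarrow> real"
    and pdata :: "'s \<Rightarrow> real"
    and qcond :: "real \<Rightarrow> 's \<Rightarrow> 's \<Rightarrow> real"
    and Rth :: "'p::real_normed_vector \<Rightarrow> real \<Rightarrow> 's \<Rightarrow> 's \<Rightarrow> real"
  assumes T_pos: "T > 0"
    and rate: "\<forall>t\<in>{0..T}. rate_matrix (R t)"
    and pdata_distr: "is_distribution pdata"
    and q_distr: "\<forall>t\<in>{0..T}. \<forall>x0. is_distribution (\<lambda>i. qcond t i x0)"
    and q_init: "\<forall>i x0. qcond 0 i x0 = (if i = x0 then 1 else 0)"
    and kolmogorov: "\<forall>x0 j. \<forall>t\<in>{0..T}.
          ((\<lambda>s. qcond s j x0) has_real_derivative (\<Sum>i\<in>UNIV. qcond t i x0 * R t i j)) (at t within {0..T})"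
    and q_pos: "\<forall>t\<in>{0<..T}. \<forall>i x0. qcond t i x0 > 0"
    and Rth_pos: "\<forall>th. \<forall>t\<in>{0..T}. \<forall>i j. i \<noteq> j \<longrightarrow> Rth th t i j > 0"
    and Rth_diff: "\<forall>th. \<forall>t\<in>{0..T}. \<forall>i j. i \<noteq> j \<longrightarrow> (\<lambda>th'. Rth th' t i j) differentiable (at th)"
    and int_LKL: "\<forall>th. set_integrable lborel {0..T} (LKL_integrand R pdata qcond Rth th)"
    and int_KL: "\<forall>th. set_integrable lborel {0..T} (KL_integrand R pdata qcond Rth th)"
  shows "\<exists>C::real. C \<ge> 0 \<and>
           (\<forall>th. L_KL T R pdata qcond Rth th = KL_path T R pdata qcond Rth th + C) \<and>
           (\<forall>th D. (L_KL T R pdata qcond Rth has_derivative D) (at th)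
                   \<longleftrightarrow> (KL_path T R pdata qcond Rth has_derivative D) (at th)) \<and>
           (\<forall>th. (\<forall>th'. L_KL T R pdata qcond Rth th \<le> L_KL T R pdata qcond Rth th')
                   \<longleftrightarrow> (\<forall>th'. KL_path T R pdata qcond Rth th \<le> KL_path T R pdata qcond Rth th')) \<and>
           (\<forall>th. (L_KL T R pdata qcond Rth has_derivative (\<lambda>_. 0)) (at th)
                   \<longleftrightarrow> (KL_path T R pdata qcond Rth has_derivative (\<lambda>_. 0)) (at th))"
proof -
  have pdata_nonneg: "pdata x0 \<ge> 0" for x0
    using pdata_distr by (simp add: is_distribution_def)
  have gap_eq: "LKL_integrand R pdata qcond Rth th t
      = KL_integrand R pdata qcond Rth th t + rev_rate_gap R pdata qcond t"
    and gap_nonneg: "rev_rate_gap R pdata qcond t \<ge> 0" if "t \<in> {0<..T}" for th t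
    using that q_pos rate Rth_pos pdata_nonneg
    by (auto simp: rate_matrix_def intro!: LKL_integrand_eq_KL_integrand_add_gap rev_rate_gap_nonneg)
  \<comment> \<open>At \<open>t = 0\<close> the conditionals are point masses, so the posterior-mean identity need not hold.\<close>
  have positive_time: "AE t\<in>{0..T} in lborel. t \<in> {0<..T}"
    using AE_lborel_singleton[of 0] by eventually_elim auto
  have gap_eq_AE: "AE t\<in>{0..T} in lborel. LKL_integrand R pdata qcond Rth th t
      = KL_integrand R pdata qcond Rth th t + rev_rate_gap R pdata qcond t" for th
    using positive_time by (rule eventually_mono) (simp add: gap_eq)
  have gap_nonneg_AE: "AE t\<in>{0..T} in lborel. rev_rate_gap R pdata qcond t \<ge> 0"
    using positive_time by (rule eventually_mono) (simp add: gap_nonneg)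
  obtain C where "C \<ge> 0"
    and C: "\<And>th. L_KL T R pdata qcond Rth th = KL_path T R pdata qcond Rth th + C"
    using set_integrals_differ_by_const[of lborel "{0..T}" "LKL_integrand R pdata qcond Rth"
        "KL_integrand R pdata qcond Rth", OF int_LKL[rule_format] int_KL[rule_format] gap_eq_AE gap_nonneg_AE]
    unfolding L_KL_def KL_path_def by blast
  then have "L_KL T R pdata qcond Rth = (\<lambda>th. KL_path T R pdata qcond Rth th + C)"
    by auto
  then show ?thesis
    using \<open>C \<ge> 0\<close> by (auto simp: has_derivative_add_const_iff)
qed

end
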